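(* Let $p\ge 1$ and $c>0$ be constants. For $a>0$ let $x_a:[0,\infty)\to\mathbb{R}$ be the unique solution of $$x'''+c\,x^p\, x''=0,\qquad x(0)=0=x'(0),\quad x''(0)=a,$$ let $h(a):=\lim_{t\to\infty}x_a'(t)$ and $\mu(a):=\lim_{t\to\infty}\big(h(a)t-x_a(t)\big)$ (both limits exist and are finite). Define $$c_2:=\Gamma\!\left(\tfrac{1}{2p+1}\right)\left(\frac{2^p}{c\,(2p+1)^{2p}}\right)^{\frac{1}{2p+1}},\qquad c_3:=\Gamma\!\left(\tfrac{2}{2p+1}\right)(2p+1)^{\frac{1-2p}{2p+1}}\left(\frac{2^p}{c}\right)^{\frac{2}{2p+1}},$$ $$c_4:=\frac{2^{2p/(2p+1)}\,\Gamma\big(2/(2p+1)\big)}{(2p+1)^{(2p-1)/(2p+1)}\,c^{2/(2p+1)}},$$ $$c_5:=\frac{1}{c_2^2}\left[\frac{c_3^2}{2}+\left(\frac{c_2}{c}\right)^{2/(p+1)}(p+1)^{(1-p)/(1+p)}\,\Gamma\!\left(\tfrac{2}{p+1}\right)+c_3\left(\frac{c_2}{c\,(p+1)^p}\right)^{1/(p+1)}\Gamma\!\left(\tfrac{1}{p+1}\right)\right].$$ Then for every $a>0$, $$c_4\, a^{1/(2p+1)}\le \mu(a)\le c_5\, a^{1/(2p+1)}.$$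
   Context: $\Gamma$ denotes the Euler Gamma function. *)

theory Defs
  imports "HOL-Analysis.Analysis"
begin

definition c2 :: "real \<Rightarrow> real \<Rightarrow> real" where
  "c2 p c = Gamma (1 / (2*p+1)) * (2 powr p / (c * (2*p+1) powr (2*p))) powr (1 / (2*p+1))"

definition c3 :: "real \<Rightarrow> real \<Rightarrow> real" where
  "c3 p c = Gamma (2 / (2*p+1)) * (2*p+1) powr ((1 - 2*p) / (2*p+1)) * (2 powr p / c) powr (2 / (2*p+1))"

definition c4 :: "real \<Rightarrow> real \<Rightarrow> real" where
  "c4 p c = (2 powr (2*p / (2*p+1)) * Gamma (2 / (2*p+1))) /
            ((2*p+1) powr ((2*p-1) / (2*p+1)) * c powr (2 / (2*p+1)))"

definition c5 :: "real \<Rightarrow> real \<Rightarrow> real" where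
  "c5 p c = (1 / (c2 p c)^2) *
     ((c3 p c)^2 / 2
      + (c2 p c / c) powr (2 / (p+1)) * (p+1) powr ((1-p) / (1+p)) * Gamma (2 / (p+1))
      + c3 p c * (c2 p c / (c * (p+1) powr p)) powr (1 / (p+1)) * Gamma (1 / (p+1)))"

end

theory Submission
  imports Defs
begin

text \<open>
  Then \<open>x'' > 0\<close>, so \<open>x\<close> is increasing and convex with
  \<open>x'' \<le> a\<close>, hence \<open>x \<le> a t\<^sup>2/2\<close>; inserted into \<open>(ln x'')' = -c x\<^sup>p\<close> this gives
  \<open>x''(t) \<ge> a exp(-K t\<^sup>2\<^sup>p\<^sup>+\<^sup>1)\<close>. Integrating twice yields \<open>x(t) \<ge> h\<^sub>0 t - \<mu>\<^sub>0\<close>, where \<open>h\<^sub>0\<close> and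
  \<open>\<mu>\<^sub>0\<close> are the zeroth and first moments of that lower bound, i.e. values of \<open>\<Gamma>\<close>; in turn
  \<open>x''(t) \<le> a exp(-L (t - T)\<^sup>p\<^sup>+\<^sup>1)\<close> for \<open>t \<ge> T = \<mu>\<^sub>0/h\<^sub>0\<close>. The function \<open>t x'(t) - x(t)\<close> has
  derivative \<open>t x''(t)\<close>, so the two estimates bound it between \<open>\<integral>\<^sub>0\<^sup>t u a exp(-K u\<^sup>2\<^sup>p\<^sup>+\<^sup>1) du\<close>
  and a constant \<open>\<mu>\<^sub>1\<close>; both bounds pass to \<open>\<mu> = lim (h t - x(t))\<close>. Finally
  \<open>\<mu>\<^sub>0 = c\<^sub>4 a\<^sup>1\<^sup>/\<^sup>(\<^sup>2\<^sup>p\<^sup>+\<^sup>1\<^sup>)\<close> and \<open>\<mu>\<^sub>1 = c\<^sub>5 a\<^sup>1\<^sup>/\<^sup>(\<^sup>2\<^sup>p\<^sup>+\<^sup>1\<^sup>)\<close>.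
\<close>

section \<open>Stretched exponential integrals\<close>

definition stretched_exp_integral :: "real \<Rightarrow> real \<Rightarrow> real \<Rightarrow> real" where
  "stretched_exp_integral k r K = Gamma (k/r) / (r * K powr (k/r))"

lemma stretched_exp_integral_pos:
  "K > 0 \<Longrightarrow> r > 0 \<Longrightarrow> k > 0 \<Longrightarrow> stretched_exp_integral k r K > 0"
  by (simp add: stretched_exp_integral_def Gamma_real_pos)

lemma ln_stretched_exp_integral:
  assumes "K > 0" and "r > 0" and "k > 0"
  shows "ln (stretched_exp_integral k r K) = ln (Gamma (k/r)) - ln r - k * ln K / r"
proof -
  have "Gamma (k/r) > 0" using assms by (simp add: Gamma_real_pos)
  then show ?thesis
    unfolding stretched_exp_integral_def using assms
    by (simp add: ln_mult ln_div ln_powr less_imp_neq[symmetric])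
qed

lemma has_integral_Ioi_iff_Ici:
  fixes f :: "real \<Rightarrow> real"
  shows "(f has_integral I) {0<..} \<longleftrightarrow> (f has_integral I) {0..}"
  by (rule has_integral_spike_set_eq; rule negligible_subset[of "{0}"]) auto

text \<open>Substituting \<open>s = K u\<^sup>r\<close> in Euler's integral for \<open>\<Gamma>(k/r)\<close>.\<close>

lemma has_integral_stretched_exp_Ioi:
  fixes K r k :: real
  assumes K: "K > 0" and r: "r > 0" and k: "k > 0"
  shows "((\<lambda>u. u powr (k-1) * exp (- K * u powr r)) has_integral stretched_exp_integral k r K) {0<..}"
proof -
  define S :: "real set" where "S = {0<..}"
  define g where "g u = K * u powr r" for u :: real
  define g' where "g' u = K * (r * u powr (r-1))" for u :: real
  define f where "f s = s powr (k/r - 1) / exp s" for s :: real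
  have kr: "k/r > 0" using k r by simp
  have f_int: "(f has_integral Gamma (k/r)) S"
    unfolding S_def f_def has_integral_Ioi_iff_Ici by (rule Gamma_integral_real[OF kr])
  have f_abs: "f absolutely_integrable_on S"
    using f_int by (intro nonnegative_absolutely_integrable_1) (auto simp: f_def S_def)
  have g_deriv: "(g has_field_derivative g' u) (at u within S)" if "u \<in> S" for u
    using that unfolding g_def g'_def S_def by (auto intro!: derivative_eq_intros)
  have g_inj: "inj_on g S"
    unfolding inj_on_def g_def S_def using K r
    by (auto, metis linorder_neq_iff powr_less_mono2 less_imp_le less_irrefl)
  have g_image: "g ` S = S"
  proof
    show "g ` S \<subseteq> S" using K unfolding g_def S_def by auto
    show "S \<subseteq> g ` S"
    proof
      fix s assume "s \<in> S"
      hence s: "s > 0" by (simp add: S_def)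
      have "g ((s/K) powr (1/r)) = s"
        unfolding g_def using s K r by (simp add: powr_powr)
      moreover have "(s/K) powr (1/r) \<in> S" using s K by (simp add: S_def)
      ultimately show "s \<in> g ` S" by (metis image_eqI)
    qed
  qed
  have "(\<lambda>u. \<bar>g' u\<bar> * f (g u)) absolutely_integrable_on S \<and>
        integral S (\<lambda>u. \<bar>g' u\<bar> * f (g u)) = Gamma (k/r)"
    using has_absolute_integral_change_of_variables_1'[OF _ g_deriv g_inj, of f "Gamma (k/r)"]
      f_abs f_int g_image
    unfolding S_def by (auto simp: integral_unique)
  hence subst_int: "((\<lambda>u. \<bar>g' u\<bar> * f (g u)) has_integral Gamma (k/r)) S"
    using set_lebesgue_integral_eq_integral(1) has_integral_integral by metis
  have integrand_eq:
    "\<bar>g' u\<bar> * f (g u) = (r * K powr (k/r)) * (u powr (k-1) * exp (- K * u powr r))"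
    if "u \<in> S" for u
  proof -
    have u: "u > 0" using that by (simp add: S_def)
    have "(K * u powr r) powr (k/r - 1) = K powr (k/r - 1) * u powr (r*(k/r-1))"
      using u K by (simp add: powr_mult powr_powr)
    moreover have "K * K powr (k/r - 1) = K powr (k/r)"
      using K powr_add[of K 1 "k/r-1"] by simp
    moreover have "u powr (r-1) * u powr (r*(k/r-1)) = u powr (k-1)"
      using r by (simp add: powr_add[symmetric] algebra_simps)
    ultimately show ?thesis unfolding g'_def f_def g_def using u K r
      by (simp add: exp_minus field_simps)
  qed
  have "((\<lambda>u. (r * K powr (k/r)) * (u powr (k-1) * exp (- K * u powr r))) has_integral Gamma (k/r)) S"
    using subst_int integrand_eq by (rule has_integral_eq[rotated])
  hence "((\<lambda>u. inverse (r * K powr (k/r)) * ((r * K powr (k/r)) * (u powr (k-1) * exp (- K * u powr r))))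
           has_integral inverse (r * K powr (k/r)) * Gamma (k/r)) S"
    by (rule has_integral_mult_right)
  moreover have "r * K powr (k/r) \<noteq> 0" using r K by simp
  ultimately show ?thesis
    unfolding S_def stretched_exp_integral_def by (simp add: field_simps)
qed

lemma has_integral_stretched_exp:
  fixes K r :: real
  assumes "K > 0" and "r > 0"
  shows "((\<lambda>u. exp (- K * u powr r)) has_integral stretched_exp_integral 1 r K) {0..}"
    and "((\<lambda>u. u * exp (- K * u powr r)) has_integral stretched_exp_integral 2 r K) {0..}"
proof -
  have "((\<lambda>u. u powr (1-1) * exp (- K * u powr r)) has_integral stretched_exp_integral 1 r K) {0<..}"
    using assms by (intro has_integral_stretched_exp_Ioi) auto
  then have "((\<lambda>u. exp (- K * u powr r)) has_integral stretched_exp_integral 1 r K) {0<..}"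
    by (rule has_integral_eq[rotated]) simp
  then show "((\<lambda>u. exp (- K * u powr r)) has_integral stretched_exp_integral 1 r K) {0..}"
    by (subst has_integral_Ioi_iff_Ici[symmetric])
  have "((\<lambda>u. u powr (2-1) * exp (- K * u powr r)) has_integral stretched_exp_integral 2 r K) {0<..}"
    using assms by (intro has_integral_stretched_exp_Ioi) auto
  then have "((\<lambda>u. u * exp (- K * u powr r)) has_integral stretched_exp_integral 2 r K) {0<..}"
    by (rule has_integral_eq[rotated]) simp
  then show "((\<lambda>u. u * exp (- K * u powr r)) has_integral stretched_exp_integral 2 r K) {0..}"
    by (subst has_integral_Ioi_iff_Ici[symmetric])
qed

section \<open>Comparison principles on the half-line\<close>

lemma
  fixes f :: "real \<Rightarrow> real"
  assumes f: "continuous_on {0..} f" and f_nonneg: "\<And>u. u \<ge> 0 \<Longrightarrow> f u \<ge> 0"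
    and f_int: "(f has_integral I) {0..}"
  shows integral_upto_le: "integral {0..t} f \<le> I"
    and tendsto_integral_upto: "((\<lambda>t. integral {0..t} f) \<longlongrightarrow> I) at_top"
proof -
  have "f integrable_on {0..t}" for t
    by (rule integrable_continuous_interval) (rule continuous_on_subset[OF f], auto)
  then show "integral {0..t} f \<le> I"
    using integral_subset_le[of "{0..t}" "{0..}" f] f_int f_nonneg
    by (auto simp: integral_unique has_integral_integrable)
  have f_abs: "f absolutely_integrable_on {0..}"
    using f_int f_nonneg by (intro nonnegative_absolutely_integrable_1) (auto simp: has_integral_integrable)
  have "((\<lambda>b. set_lebesgue_integral lebesgue {0..b} f) \<longlongrightarrow> set_lebesgue_integral lebesgue {0..} f) at_top"
    by (rule tendsto_set_lebesgue_integral_at_top) (use f_abs in auto)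
  moreover have "set_lebesgue_integral lebesgue {0..b} f = integral {0..b} f" for b
    by (rule set_lebesgue_integral_eq_integral(2)) (rule set_integrable_subset[OF f_abs], auto)
  moreover have "set_lebesgue_integral lebesgue {0..} f = I"
    using set_lebesgue_integral_eq_integral(2)[OF f_abs] f_int by (simp add: integral_unique)
  ultimately show "((\<lambda>t. integral {0..t} f) \<longlongrightarrow> I) at_top" by simp
qed

lemma
  fixes f f' :: "real \<Rightarrow> real"
  assumes "\<And>t. t \<ge> 0 \<Longrightarrow> (f has_real_derivative f' t) (at t within {0..})"
  shows continuous_on_Ici_if_derivative: "continuous_on {0..} f"
    and has_real_derivative_at_if_Ici: "t > 0 \<Longrightarrow> (f has_real_derivative f' t) (at t)"
proof -
  show "continuous_on {0..} f"
    unfolding continuous_on_eq_continuous_within using assms DERIV_continuous by (metis atLeast_iff)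
  assume "t > 0"
  hence "at t within {0..} = at t" by (intro at_within_interior) auto
  then show "(f has_real_derivative f' t) (at t)" using assms \<open>t > 0\<close> by (metis less_imp_le)
qed

lemma
  fixes w :: "real \<Rightarrow> real"
  assumes w: "continuous_on {0..} w"
  shows continuous_on_integral_upto: "continuous_on {0..} (\<lambda>t. integral {0..t} w)"
    and has_real_derivative_integral_upto:
      "t > 0 \<Longrightarrow> ((\<lambda>t. integral {0..t} w) has_real_derivative w t) (at t)"
proof -
  have "((\<lambda>u. integral {0..u} w) has_real_derivative w t) (at t within {0..})" if "t \<ge> 0" for t
  proof -
    have "((\<lambda>u. integral {0..u} w) has_real_derivative w t) (at t within {0..t+1})"
      by (rule integral_has_real_derivative, rule continuous_on_subset[OF w]) (use that in auto)
    moreover have "at t within {0..t+1} = at t within {0..}"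
      by (rule at_within_nhd[of _ "{..<t+1}"]) (use that in auto)
    ultimately show ?thesis by simp
  qed
  then show "continuous_on {0..} (\<lambda>t. integral {0..t} w)"
    and "t > 0 \<Longrightarrow> ((\<lambda>t. integral {0..t} w) has_real_derivative w t) (at t)"
    by (auto intro: continuous_on_Ici_if_derivative has_real_derivative_at_if_Ici)
qed

lemma continuous_on_Icc_if_Ici:
  fixes f :: "real \<Rightarrow> 'a::topological_space"
  shows "continuous_on {0..} f \<Longrightarrow> 0 \<le> s \<Longrightarrow> continuous_on {s..t} f"
  by (rule continuous_on_subset) auto

lemma increasing_if_derivative_nonneg:
  fixes f f' :: "real \<Rightarrow> real"
  assumes "s \<le> t" and "continuous_on {s..t} f"
    and "\<And>r. s < r \<Longrightarrow> r < t \<Longrightarrow> (f has_real_derivative f' r) (at r)"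
    and "\<And>r. s < r \<Longrightarrow> r < t \<Longrightarrow> f' r \<ge> 0"
  shows "f s \<le> f t"
  using assms by (intro DERIV_nonneg_imp_increasing_open[OF assms(1)]) blast+

lemma increment_le_if_derivative_le:
  fixes f g f' g' :: "real \<Rightarrow> real"
  assumes "s \<le> t" and "continuous_on {s..t} f" and "continuous_on {s..t} g"
    and "\<And>r. s < r \<Longrightarrow> r < t \<Longrightarrow> (f has_real_derivative f' r) (at r)"
    and "\<And>r. s < r \<Longrightarrow> r < t \<Longrightarrow> (g has_real_derivative g' r) (at r)"
    and "\<And>r. s < r \<Longrightarrow> r < t \<Longrightarrow> f' r \<le> g' r"
  shows "f t - f s \<le> g t - g s"
proof -
  have "g s - f s \<le> g t - f t"
    by (rule increasing_if_derivative_nonneg[where f' = "\<lambda>r. g' r - f' r"])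
      (use assms in \<open>auto intro!: derivative_eq_intros continuous_intros\<close>)
  then show ?thesis by simp
qed

lemma increment_le_integral:
  fixes F F' w :: "real \<Rightarrow> real"
  assumes w: "continuous_on {0..} w" and w_nonneg: "\<And>v. v \<ge> 0 \<Longrightarrow> w v \<ge> 0"
    and w_int: "(w has_integral I) {0..}"
    and "T \<le> t" and F: "continuous_on {T..t} F"
    and F': "\<And>r. T < r \<Longrightarrow> r < t \<Longrightarrow> (F has_real_derivative F' r) (at r)"
    and F'_le: "\<And>r. T < r \<Longrightarrow> r < t \<Longrightarrow> F' r \<le> w (r - T)"
  shows "F t - F T \<le> I"
proof -
  define W where "W r = integral {0..r - T} w" for r
  have W': "(W has_real_derivative w (r - T)) (at r)" if "T < r" for r
  proof -
    have "(W has_real_derivative w (r - T) * 1) (at r)"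
      unfolding W_def
      by (rule DERIV_chain2[of "\<lambda>t. integral {0..t} w"])
        (use has_real_derivative_integral_upto[OF w] that in \<open>auto intro!: derivative_eq_intros\<close>)
    then show ?thesis by simp
  qed
  have "continuous_on {T..t} W"
    unfolding W_def
    by (rule continuous_on_compose2[OF continuous_on_integral_upto[OF w]]) (auto intro!: continuous_intros)
  then have "F t - F T \<le> W t - W T"
    using increment_le_if_derivative_le[OF \<open>T \<le> t\<close> F _ F' W' F'_le] by simp
  also have "\<dots> \<le> I"
    unfolding W_def using integral_upto_le[OF w w_nonneg w_int] by simp
  finally show ?thesis .
qed

lemma first_nonpositive_point:
  fixes y :: "real \<Rightarrow> real"
  assumes y: "continuous_on {0..} y" and "y 0 > 0" and "t \<ge> 0" and "y t \<le> 0"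
  obtains t0 where "t0 > 0" and "y t0 \<le> 0" and "\<And>s. 0 \<le> s \<Longrightarrow> s < t0 \<Longrightarrow> y s > 0"
proof -
  define Z where "Z = {s. s \<ge> 0 \<and> y s \<le> 0}"
  have bdd: "bdd_below Z" unfolding Z_def by (rule bdd_belowI[of _ 0]) auto
  have "Z = {0..} \<inter> y -` {..0}" by (auto simp: Z_def)
  moreover have "closed ({0..} \<inter> y -` {..0})"
    by (rule continuous_closed_preimage[OF y]) auto
  ultimately have "closed Z" by simp
  moreover have "t \<in> Z" using assms by (simp add: Z_def)
  ultimately have "Inf Z \<in> Z" using closed_contains_Inf[OF _ bdd] by blast
  moreover have "y s > 0" if "0 \<le> s" "s < Inf Z" for s
    using cInf_lower[OF _ bdd, of s] that by (force simp: Z_def)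
  ultimately show thesis
    using that \<open>y 0 > 0\<close> by (metis (mono_tags, lifting) Z_def mem_Collect_eq order_le_less not_le)
qed

lemma increasing_bounded_convergent_at_top:
  fixes f :: "real \<Rightarrow> real"
  assumes mono: "\<And>s t. 0 \<le> s \<Longrightarrow> s \<le> t \<Longrightarrow> f s \<le> f t"
    and bounded: "\<And>t. 0 \<le> t \<Longrightarrow> f t \<le> B"
  obtains l where "(f \<longlongrightarrow> l) at_top"
proof
  have bdd: "bdd_above (f ` {0..})" using bounded by (auto intro!: bdd_aboveI)
  show "(f \<longlongrightarrow> Sup (f ` {0..})) at_top"
  proof (rule order_tendstoI)
    fix y assume "y < Sup (f ` {0..})"
    then obtain t0 where "t0 \<ge> 0" "y < f t0" using less_cSupD[of "f ` {0..}"] by auto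
    then show "\<forall>\<^sub>F t in at_top. y < f t"
      unfolding eventually_at_top_linorder using mono by (intro exI[of _ t0]) force
  next
    fix y assume "Sup (f ` {0..}) < y"
    then show "\<forall>\<^sub>F t in at_top. f t < y"
      unfolding eventually_at_top_linorder using cSup_upper[OF _ bdd] by (intro exI[of _ 0]) force
  qed
qed

text \<open>If \<open>F' = f\<close> increases to \<open>h\<close>, then \<open>h t - F t\<close> is the limit of \<open>t f s - F t\<close> as \<open>s \<rightarrow> \<infinity>\<close>,
  and for \<open>s \<ge> t\<close> the mean value theorem bounds the latter by \<open>s f s - F s\<close>.\<close>

lemma slope_limit_gap_le:
  fixes F f :: "real \<Rightarrow> real"
  assumes F: "continuous_on {0..} F" and F': "\<And>r. r > 0 \<Longrightarrow> (F has_real_derivative f r) (at r)"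
    and f_mono: "\<And>r s. 0 \<le> r \<Longrightarrow> r \<le> s \<Longrightarrow> f r \<le> f s" and f_lim: "(f \<longlongrightarrow> h) at_top"
    and gap: "\<And>s. s \<ge> 0 \<Longrightarrow> s * f s - F s \<le> B" and "t \<ge> 0"
  shows "h * t - F t \<le> B"
proof (rule tendsto_upperbound)
  show "((\<lambda>s. t * f s - F t) \<longlongrightarrow> h * t - F t) at_top"
    using f_lim by (auto intro!: tendsto_eq_intros)
  have "t * f s - F t \<le> B" if "s \<ge> t" for s
  proof -
    have "F s - F t \<le> s * f s - t * f s"
      by (rule increment_le_if_derivative_le[OF that _ _ F', where g' = "\<lambda>_. f s"])
        (use F \<open>t \<ge> 0\<close> that f_mono in
          \<open>auto intro!: derivative_eq_intros continuous_intros intro: continuous_on_Icc_if_Ici\<close>)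
    then show ?thesis using gap[of s] \<open>t \<ge> 0\<close> that by simp
  qed
  then show "\<forall>\<^sub>F s in at_top. t * f s - F t \<le> B"
    by (rule eventually_at_top_linorderI)
qed simp

lemma double_integral_upto_ge:
  fixes g :: "real \<Rightarrow> real"
  assumes g: "continuous_on {0..} g" and g_nonneg: "\<And>u. u \<ge> 0 \<Longrightarrow> g u \<ge> 0"
    and g_int: "(g has_integral I) {0..}" and ug_int: "((\<lambda>u. u * g u) has_integral M) {0..}"
    and "t \<ge> 0"
  shows "I * t - M \<le> integral {0..t} (\<lambda>s. integral {0..s} g)"
proof -
  define G where "G s = integral {0..s} g" for s
  define H where "H s = integral {0..s} G" for s
  have G: "continuous_on {0..} G" and G': "\<And>r. r > 0 \<Longrightarrow> (G has_real_derivative g r) (at r)"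
    unfolding G_def using continuous_on_integral_upto[OF g] has_real_derivative_integral_upto[OF g]
    by auto
  have H: "continuous_on {0..} H" and H': "\<And>r. r > 0 \<Longrightarrow> (H has_real_derivative G r) (at r)"
    unfolding H_def using continuous_on_integral_upto[OF G] has_real_derivative_integral_upto[OF G]
    by auto
  have G_mono: "G r \<le> G s" if "0 \<le> r" "r \<le> s" for r s
    by (rule increasing_if_derivative_nonneg[OF that(2) continuous_on_Icc_if_Ici[OF G that(1)] G'])
      (use that g_nonneg in auto)
  have "s * G s - H s \<le> M" if "s \<ge> 0" for s
  proof -
    have "(s * G s - H s) - (0 * G 0 - H 0) \<le> M"
      by (rule increment_le_integral[OF _ _ ug_int that, where F' = "\<lambda>r. r * g r"])
        (use g g_nonneg G H G' H' in
          \<open>auto intro!: continuous_intros derivative_eq_intros intro: continuous_on_Icc_if_Ici\<close>)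
    then show ?thesis by (simp add: G_def H_def)
  qed
  then have "I * t - H t \<le> M"
    using slope_limit_gap_le[OF H H' G_mono _ _ \<open>t \<ge> 0\<close>] tendsto_integral_upto[OF g g_nonneg g_int]
    unfolding G_def by blast
  then show ?thesis unfolding H_def G_def by simp
qed

section \<open>Solutions of \<open>x''' + c x\<^sup>p x'' = 0\<close>\<close>

text \<open>For \<open>p = 1\<close>, \<open>c = 1/2\<close> this is the Blasius boundary-layer equation.\<close>

locale blasius_solution =
  fixes p c a :: real and x x1 x2 :: "real \<Rightarrow> real"
  assumes p: "p \<ge> 1" and c: "c > 0" and a: "a > 0"
    and x_deriv: "\<And>t. t \<ge> 0 \<Longrightarrow> (x has_real_derivative x1 t) (at t within {0..})"
    and x1_deriv: "\<And>t. t \<ge> 0 \<Longrightarrow> (x1 has_real_derivative x2 t) (at t within {0..})"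
    and x2_deriv: "\<And>t. t \<ge> 0 \<Longrightarrow> (x2 has_real_derivative (- c * (x t powr p) * x2 t)) (at t within {0..})"
    and x_0: "x 0 = 0" and x1_0: "x1 0 = 0" and x2_0: "x2 0 = a"
begin

lemma continuous_x: "continuous_on {0..} x"
  and continuous_x1: "continuous_on {0..} x1"
  and continuous_x2: "continuous_on {0..} x2"
  by (rule continuous_on_Ici_if_derivative, fact x_deriv x1_deriv x2_deriv)+

lemma DERIV_x: "t > 0 \<Longrightarrow> (x has_real_derivative x1 t) (at t)"
  by (rule has_real_derivative_at_if_Ici[OF x_deriv])

lemma DERIV_x1: "t > 0 \<Longrightarrow> (x1 has_real_derivative x2 t) (at t)"
  by (rule has_real_derivative_at_if_Ici[OF x1_deriv])

lemma DERIV_x2: "t > 0 \<Longrightarrow> (x2 has_real_derivative (- c * (x t powr p) * x2 t)) (at t)"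
  by (rule has_real_derivative_at_if_Ici[OF x2_deriv])

text \<open>Up to the first zero \<open>t\<^sub>0\<close> of \<open>x''\<close> the function \<open>x\<close> increases, so \<open>c x\<^sup>p \<le> Q := c x(t\<^sub>0)\<^sup>p\<close>
  there and \<open>x'' e\<^sup>Q\<^sup>t\<close> cannot decrease from \<open>a > 0\<close> to \<open>0\<close>.\<close>

lemma x2_pos:
  assumes "t \<ge> 0"
  shows "x2 t > 0"
proof (rule ccontr)
  assume "\<not> x2 t > 0"
  then obtain t0 where t0: "t0 > 0" "x2 t0 \<le> 0" and before: "\<And>s. 0 \<le> s \<Longrightarrow> s < t0 \<Longrightarrow> x2 s > 0"
    using first_nonpositive_point[OF continuous_x2] x2_0 a assms by (metis not_less)
  have x1_mono: "x1 r \<le> x1 s" if "0 \<le> r" "r \<le> s" "s \<le> t0" for r s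
    by (rule increasing_if_derivative_nonneg[OF that(2) continuous_on_Icc_if_Ici[OF continuous_x1 that(1)] DERIV_x1])
      (use that in \<open>auto intro!: less_imp_le[OF before]\<close>)
  have x_mono: "x r \<le> x s" if "0 \<le> r" "r \<le> s" "s \<le> t0" for r s
    by (rule increasing_if_derivative_nonneg[OF that(2) continuous_on_Icc_if_Ici[OF continuous_x that(1)] DERIV_x])
      (use that x1_mono[of 0] x1_0 in auto)
  define Q where "Q = c * x t0 powr p"
  have "x2 0 * exp (Q * 0) \<le> x2 t0 * exp (Q * t0)"
  proof (rule increasing_if_derivative_nonneg[where f = "\<lambda>s. x2 s * exp (Q * s)"
        and f' = "\<lambda>s. exp (Q * s) * x2 s * (Q - c * x s powr p)"])
    show "continuous_on {0..t0} (\<lambda>s. x2 s * exp (Q * s))"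
      by (intro continuous_intros continuous_on_Icc_if_Ici[OF continuous_x2]) simp
    fix s assume s: "0 < s" "s < t0"
    show "((\<lambda>s. x2 s * exp (Q * s)) has_real_derivative exp (Q * s) * x2 s * (Q - c * x s powr p)) (at s)"
      using DERIV_x2[OF s(1)] by (auto intro!: derivative_eq_intros simp: algebra_simps)
    have "x s powr p \<le> x t0 powr p"
      by (rule powr_mono2) (use p s x_mono[of 0 s] x_mono[of s t0] x_0 in auto)
    then have "c * x s powr p \<le> Q" unfolding Q_def using c by simp
    then show "exp (Q * s) * x2 s * (Q - c * x s powr p) \<ge> 0"
      using before[of s] s by simp
  qed (use t0 in simp)
  then show False
    using x2_0 a t0 mult_nonpos_nonneg[of "x2 t0" "exp (Q * t0)"] by simp
qed

lemma x1_mono: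
  assumes "0 \<le> s" and "s \<le> t" shows "x1 s \<le> x1 t"
  by (rule increasing_if_derivative_nonneg[OF assms(2) continuous_on_Icc_if_Ici[OF continuous_x1 assms(1)] DERIV_x1])
    (use assms x2_pos in \<open>auto intro: less_imp_le\<close>)

lemma x_nonneg:
  assumes "t \<ge> 0" shows "x t \<ge> 0"
proof -
  have "x 0 \<le> x t"
    by (rule increasing_if_derivative_nonneg[OF assms continuous_on_Icc_if_Ici[OF continuous_x] DERIV_x])
      (use x1_mono[of 0] x1_0 in auto)
  then show ?thesis using x_0 by simp
qed

lemma x2_le:
  assumes "t \<ge> 0" shows "x2 t \<le> a"
proof -
  have "- x2 0 \<le> - x2 t"
  proof (rule increasing_if_derivative_nonneg[OF assms, where f' = "\<lambda>s. c * (x s powr p) * x2 s"])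
    show "continuous_on {0..t} (\<lambda>s. - x2 s)"
      by (intro continuous_intros continuous_on_Icc_if_Ici[OF continuous_x2]) simp
    fix r :: real assume "0 < r"
    then show "((\<lambda>s. - x2 s) has_real_derivative c * x r powr p * x2 r) (at r)"
      and "c * x r powr p * x2 r \<ge> 0"
      using DERIV_x2[of r] c x2_pos[of r] by (auto intro!: derivative_eq_intros)
  qed
  then show ?thesis using x2_0 by simp
qed

lemma x1_le:
  assumes "t \<ge> 0" shows "x1 t \<le> a * t"
proof -
  have "x1 t - x1 0 \<le> a * t - a * 0"
    by (rule increment_le_if_derivative_le[OF assms continuous_on_Icc_if_Ici[OF continuous_x1] _ DERIV_x1])
      (use x2_le in \<open>auto intro!: continuous_intros derivative_eq_intros\<close>)
  then show ?thesis using x1_0 by simp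
qed

lemma x_le:
  assumes "t \<ge> 0" shows "x t \<le> a * t\<^sup>2 / 2"
proof -
  have "x t - x 0 \<le> a * t\<^sup>2 / 2 - a * 0\<^sup>2 / 2"
    by (rule increment_le_if_derivative_le[OF assms continuous_on_Icc_if_Ici[OF continuous_x] _ DERIV_x])
      (use x1_le in \<open>auto intro!: continuous_intros derivative_eq_intros simp: mult.commute\<close>)
  then show ?thesis using x_0 by simp
qed

lemma DERIV_ln_x2: "t > 0 \<Longrightarrow> ((\<lambda>s. ln (x2 s)) has_real_derivative - c * x t powr p) (at t)"
  using DERIV_x2 x2_pos[of t] by (auto intro!: derivative_eq_intros)

lemma continuous_ln_x2: "continuous_on {0..} (\<lambda>s. ln (x2 s))"
  by (intro continuous_on_ln continuous_x2) (use x2_pos in force)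

definition K :: real where "K = c * (a/2) powr p / (2*p+1)"

definition lower_x2 :: "real \<Rightarrow> real" where "lower_x2 t = a * exp (- K * t powr (2*p+1))"

definition h0 :: real where "h0 = a * stretched_exp_integral 1 (2*p+1) K"

definition mu0 :: real where "mu0 = a * stretched_exp_integral 2 (2*p+1) K"

lemma K_pos: "K > 0"
  unfolding K_def using a c p by simp

lemma h0_pos: "h0 > 0" and mu0_pos: "mu0 > 0"
  unfolding h0_def mu0_def using a p K_pos by (simp_all add: stretched_exp_integral_pos)

lemma continuous_lower_x2: "continuous_on {0..} lower_x2"
  unfolding lower_x2_def using p by (intro continuous_intros continuous_on_powr') auto

lemma lower_x2_nonneg: "lower_x2 t \<ge> 0"
  unfolding lower_x2_def using a by simp

lemma has_integral_lower_x2: "(lower_x2 has_integral h0) {0..}"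
  and has_integral_mult_lower_x2: "((\<lambda>u. u * lower_x2 u) has_integral mu0) {0..}"
proof -
  have q: "2*p+1 > 0" using p by simp
  show "(lower_x2 has_integral h0) {0..}"
    unfolding lower_x2_def h0_def
    by (rule has_integral_mult_right, rule has_integral_stretched_exp(1)[OF K_pos q])
  show "((\<lambda>u. u * lower_x2 u) has_integral mu0) {0..}"
    using has_integral_mult_right[OF has_integral_stretched_exp(2)[OF K_pos q], of a]
    unfolding lower_x2_def mu0_def by (simp add: mult.left_commute)
qed

text \<open>Since \<open>x \<le> a t\<^sup>2/2\<close>, the rate \<open>c x\<^sup>p\<close> at which \<open>ln x''\<close> decreases is at most the
  derivative of \<open>K t\<^sup>2\<^sup>p\<^sup>+\<^sup>1\<close>.\<close>

lemma lower_x2_le_x2: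
  assumes "t \<ge> 0"
  shows "lower_x2 t \<le> x2 t"
proof -
  define q where "q = 2*p+1"
  have q: "q \<ge> 3" using p by (simp add: q_def)
  have rate_le: "c * x r powr p \<le> K * (q * r powr (q - 1))" if "r > 0" for r
  proof -
    have "x r powr p \<le> (a * r\<^sup>2 / 2) powr p"
      by (rule powr_mono2) (use p that x_nonneg[of r] x_le[of r] in auto)
    also have "\<dots> = (a/2) powr p * r powr (q - 1)"
    proof -
      have "a * r\<^sup>2 / 2 = (a/2) * r powr 2" using that by (simp add: powr_numeral)
      then have "(a * r\<^sup>2 / 2) powr p = (a/2) powr p * (r powr 2) powr p"
        by (simp only: powr_mult)
      then show ?thesis by (simp add: powr_powr q_def)
    qed
    finally show ?thesis unfolding K_def q_def[symmetric] using c q by (simp add: mult_left_mono)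
  qed
  have "(- K * t powr q) - (- K * 0 powr q) \<le> ln (x2 t) - ln (x2 0)"
  proof (rule increment_le_if_derivative_le[OF assms _ continuous_on_Icc_if_Ici[OF continuous_ln_x2]
        _ DERIV_ln_x2, where f' = "\<lambda>r. - K * (q * r powr (q - 1))"])
    show "continuous_on {0..t} (\<lambda>s. - K * s powr q)"
      using q by (intro continuous_intros continuous_on_powr') auto
  qed (use q rate_le in \<open>auto intro!: derivative_eq_intros\<close>)
  then have "ln a - K * t powr q \<le> ln (x2 t)" using q x2_0 by simp
  then have "exp (ln a - K * t powr q) \<le> x2 t" using x2_pos[OF assms] by (metis exp_le_cancel_iff exp_ln)
  then show ?thesis unfolding lower_x2_def q_def[symmetric] using a by (simp add: exp_diff exp_minus field_simps)
qed

lemma x_ge_affine: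
  assumes "t \<ge> 0"
  shows "h0 * t - mu0 \<le> x t"
proof -
  define G where "G s = integral {0..s} lower_x2" for s
  have G: "continuous_on {0..} G" and G': "\<And>r. r > 0 \<Longrightarrow> (G has_real_derivative lower_x2 r) (at r)"
    unfolding G_def using continuous_on_integral_upto[OF continuous_lower_x2]
      has_real_derivative_integral_upto[OF continuous_lower_x2] by auto
  have G_le_x1: "G s \<le> x1 s" if "s \<ge> 0" for s
    using increment_le_if_derivative_le[OF that continuous_on_Icc_if_Ici[OF G] continuous_on_Icc_if_Ici[OF continuous_x1]
        G' DERIV_x1 lower_x2_le_x2] x1_0
    by (simp add: G_def)
  have "integral {0..t} G \<le> x t"
    using increment_le_if_derivative_le[OF assms continuous_on_Icc_if_Ici[OF continuous_on_integral_upto[OF G]]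
        continuous_on_Icc_if_Ici[OF continuous_x] has_real_derivative_integral_upto[OF G] DERIV_x G_le_x1] x_0
    by simp
  moreover have "h0 * t - mu0 \<le> integral {0..t} G"
    unfolding G_def
    by (rule double_integral_upto_ge[OF continuous_lower_x2 lower_x2_nonneg has_integral_lower_x2
          has_integral_mult_lower_x2 assms])
  ultimately show ?thesis by simp
qed

definition T :: real where "T = mu0 / h0"

definition L :: real where "L = c * h0 powr p / (p+1)"

definition mu1 :: real where
  "mu1 = a * T\<^sup>2 / 2 + a * stretched_exp_integral 2 (p+1) L + a * T * stretched_exp_integral 1 (p+1) L"

lemma T_pos: "T > 0"
  unfolding T_def using h0_pos mu0_pos by simp

lemma L_pos: "L > 0"
  unfolding L_def using c p h0_pos by simp

text \<open>Once \<open>x(t) \<ge> h\<^sub>0 (t - T)\<close>, the rate \<open>c x\<^sup>p\<close> at which \<open>ln x''\<close> decreases is at least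
  the derivative of \<open>L (t - T)\<^sup>p\<^sup>+\<^sup>1\<close>.\<close>

lemma x2_le_shifted_stretched_exp:
  assumes "T \<le> t"
  shows "x2 t \<le> a * exp (- L * (t - T) powr (p+1))"
proof -
  have rate_ge: "L * ((p+1) * (r - T) powr p) \<le> c * x r powr p" if "T < r" for r
  proof -
    have "h0 powr p * (r - T) powr p = (h0 * (r - T)) powr p"
      using h0_pos that by (simp add: powr_mult)
    also have "\<dots> \<le> x r powr p"
    proof (rule powr_mono2)
      show "h0 * (r - T) \<le> x r"
        using x_ge_affine[of r] that T_pos h0_pos unfolding T_def by (simp add: algebra_simps)
    qed (use p h0_pos that in auto)
    finally show ?thesis unfolding L_def using c p by (simp add: mult_left_mono)
  qed
  have "ln (x2 t) - ln (x2 T) \<le> (- L * (t - T) powr (p+1)) - (- L * (T - T) powr (p+1))"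
  proof (rule increment_le_if_derivative_le[OF assms continuous_on_Icc_if_Ici[OF continuous_ln_x2],
        where f' = "\<lambda>r. - c * x r powr p" and g' = "\<lambda>r. - L * ((p+1) * (r - T) powr p)"])
    show "continuous_on {T..t} (\<lambda>s. - L * (s - T) powr (p+1))"
      using p by (intro continuous_intros continuous_on_powr') auto
  qed (use T_pos p rate_ge DERIV_ln_x2 in \<open>auto intro!: derivative_eq_intros\<close>)
  moreover have "ln (x2 T) \<le> ln a"
    using x2_le[of T] x2_pos[of T] T_pos by simp
  ultimately have "ln (x2 t) \<le> ln a - L * (t - T) powr (p+1)" using p by simp
  then have "x2 t \<le> exp (ln a - L * (t - T) powr (p+1))"
    using x2_pos[of t] T_pos assms by (metis exp_le_cancel_iff exp_ln order.trans less_imp_le)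
  then show ?thesis using a by (simp add: exp_diff exp_minus field_simps)
qed

lemma x1_le_bound:
  assumes "t \<ge> 0"
  shows "x1 t \<le> a * T + a * stretched_exp_integral 1 (p+1) L"
proof (cases "t \<le> T")
  case True
  then show ?thesis
    using x1_mono[OF assms True] x1_le[of T] T_pos a stretched_exp_integral_pos[OF L_pos, of "p+1" 1] p
    by (smt (verit) mult_pos_pos)
next
  case False
  have "x1 t - x1 T \<le> a * stretched_exp_integral 1 (p+1) L"
  proof (rule increment_le_integral[where w = "\<lambda>v. a * exp (- L * v powr (p+1))" and F = x1 and F' = x2])
    show "continuous_on {0..} (\<lambda>v. a * exp (- L * v powr (p+1)))"
      using p by (intro continuous_intros continuous_on_powr') auto
    show "((\<lambda>v. a * exp (- L * v powr (p+1))) has_integral a * stretched_exp_integral 1 (p+1) L) {0..}"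
      using p by (intro has_integral_mult_right has_integral_stretched_exp(1)[OF L_pos]) simp
  qed (use False T_pos a DERIV_x1 x2_le_shifted_stretched_exp
      in \<open>auto intro: continuous_on_Icc_if_Ici[OF continuous_x1] less_imp_le\<close>)
  then show ?thesis using x1_le[of T] T_pos by simp
qed

text \<open>\<open>t x'(t) - x(t)\<close> is minus the intercept of the tangent line at \<open>t\<close>.\<close>

definition tangent_offset :: "real \<Rightarrow> real" where "tangent_offset t = t * x1 t - x t"

lemma continuous_tangent_offset: "continuous_on {0..} tangent_offset"
  unfolding tangent_offset_def by (intro continuous_intros continuous_x continuous_x1)

lemma DERIV_tangent_offset: "t > 0 \<Longrightarrow> (tangent_offset has_real_derivative t * x2 t) (at t)"
  unfolding tangent_offset_def using DERIV_x DERIV_x1 by (auto intro!: derivative_eq_intros)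

lemma tangent_offset_0: "tangent_offset 0 = 0"
  unfolding tangent_offset_def using x_0 by simp

lemma integral_le_tangent_offset:
  assumes "t \<ge> 0"
  shows "integral {0..t} (\<lambda>u. u * lower_x2 u) \<le> tangent_offset t"
proof -
  have cont: "continuous_on {0..} (\<lambda>u. u * lower_x2 u)"
    by (intro continuous_intros continuous_lower_x2)
  have "integral {0..t} (\<lambda>u. u * lower_x2 u) - integral {0..0} (\<lambda>u. u * lower_x2 u)
          \<le> tangent_offset t - tangent_offset 0"
    by (rule increment_le_if_derivative_le[OF assms continuous_on_Icc_if_Ici[OF continuous_on_integral_upto[OF cont]]
          continuous_on_Icc_if_Ici[OF continuous_tangent_offset] has_real_derivative_integral_upto[OF cont]
          DERIV_tangent_offset])
      (simp_all add: mult_left_mono lower_x2_le_x2)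
  then show ?thesis using tangent_offset_0 by simp
qed

lemma tangent_offset_le_quadratic:
  assumes "t \<ge> 0"
  shows "tangent_offset t \<le> a * t\<^sup>2 / 2"
proof -
  have "tangent_offset t - tangent_offset 0 \<le> a * t\<^sup>2 / 2 - a * 0\<^sup>2 / 2"
    by (rule increment_le_if_derivative_le[OF assms continuous_on_Icc_if_Ici[OF continuous_tangent_offset]
          _ DERIV_tangent_offset, where g' = "\<lambda>r. a * r"])
      (use x2_le in \<open>auto intro!: continuous_intros derivative_eq_intros simp: mult.commute mult_left_mono\<close>)
  then show ?thesis using tangent_offset_0 by simp
qed

lemma tangent_offset_le:
  assumes "t \<ge> 0"
  shows "tangent_offset t \<le> mu1"
proof -
  have A_pos: "stretched_exp_integral 1 (p+1) L > 0" and B_pos: "stretched_exp_integral 2 (p+1) L > 0"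
    using p L_pos by (simp_all add: stretched_exp_integral_pos)
  show ?thesis
  proof (cases "t \<le> T")
    case True
    then have "tangent_offset t \<le> a * T\<^sup>2 / 2"
      using tangent_offset_le_quadratic[OF assms] assms a by (smt (verit) mult_left_mono power_mono divide_right_mono)
    then show ?thesis
      unfolding mu1_def using mult_pos_pos[OF a B_pos] mult_pos_pos[OF mult_pos_pos[OF a T_pos] A_pos] by simp
  next
    case False
    define w where "w v = a * ((v + T) * exp (- L * v powr (p+1)))" for v
    have "(w has_integral a * stretched_exp_integral 2 (p+1) L + a * T * stretched_exp_integral 1 (p+1) L) {0..}"
    proof -
      have "((\<lambda>v. a * (v * exp (- L * v powr (p+1))) + a * T * exp (- L * v powr (p+1))) has_integral
              a * stretched_exp_integral 2 (p+1) L + a * T * stretched_exp_integral 1 (p+1) L) {0..}"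
        using p by (intro has_integral_add has_integral_mult_right has_integral_stretched_exp[OF L_pos]) simp_all
      then show ?thesis unfolding w_def by (simp add: algebra_simps)
    qed
    then have "tangent_offset t - tangent_offset T
                 \<le> a * stretched_exp_integral 2 (p+1) L + a * T * stretched_exp_integral 1 (p+1) L"
    proof (rule increment_le_integral[where F = tangent_offset and F' = "\<lambda>r. r * x2 r", rotated 2])
      show "continuous_on {0..} w"
        unfolding w_def using p by (intro continuous_intros continuous_on_powr') auto
      show "w v \<ge> 0" if "v \<ge> 0" for v
        unfolding w_def using a T_pos that by simp
      show "r * x2 r \<le> w (r - T)" if "T < r" for r
        using x2_le_shifted_stretched_exp[of r] that T_pos unfolding w_def by (simp add: mult_left_mono)
    qed (use False T_pos DERIV_tangent_offset in \<open>auto intro: continuous_on_Icc_if_Ici[OF continuous_tangent_offset]\<close>)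
    then show ?thesis using tangent_offset_le_quadratic[of T] T_pos unfolding mu1_def by simp
  qed
qed

theorem slope_and_offset_limits:
  obtains h \<mu> where "(x1 \<longlongrightarrow> h) at_top" and "((\<lambda>t. h * t - x t) \<longlongrightarrow> \<mu>) at_top"
    and "mu0 \<le> \<mu>" and "\<mu> \<le> mu1"
proof -
  obtain h where h: "(x1 \<longlongrightarrow> h) at_top"
    by (rule increasing_bounded_convergent_at_top[OF x1_mono x1_le_bound])
  have x1_le_h: "x1 t \<le> h" if "t \<ge> 0" for t
  proof (rule tendsto_lowerbound[OF h])
    show "\<forall>\<^sub>F s in at_top. x1 t \<le> x1 s"
      by (rule eventually_at_top_linorderI[of t]) (rule x1_mono[OF that])
  qed simp
  have gap_le: "h * t - x t \<le> mu1" if "t \<ge> 0" for t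
    using slope_limit_gap_le[OF continuous_x DERIV_x x1_mono h tangent_offset_le[unfolded tangent_offset_def] that]
    by simp
  have gap_mono: "h * s - x s \<le> h * t - x t" if "0 \<le> s" "s \<le> t" for s t
  proof (rule increasing_if_derivative_nonneg[OF that(2), where f' = "\<lambda>r. h - x1 r"])
    show "continuous_on {s..t} (\<lambda>r. h * r - x r)"
      by (intro continuous_intros continuous_on_Icc_if_Ici[OF continuous_x that(1)])
  qed (use that x1_le_h DERIV_x in \<open>auto intro!: derivative_eq_intros\<close>)
  obtain \<mu> where \<mu>: "((\<lambda>t. h * t - x t) \<longlongrightarrow> \<mu>) at_top"
    by (rule increasing_bounded_convergent_at_top[OF gap_mono gap_le])
  have "mu0 \<le> \<mu>"
  proof (rule tendsto_le[OF _ \<mu>])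
    show "((\<lambda>t. integral {0..t} (\<lambda>u. u * lower_x2 u)) \<longlongrightarrow> mu0) at_top"
      by (rule tendsto_integral_upto[OF _ _ has_integral_mult_lower_x2])
        (simp_all add: continuous_intros continuous_lower_x2 lower_x2_nonneg)
    have "integral {0..t} (\<lambda>u. u * lower_x2 u) \<le> h * t - x t" if "t \<ge> 0" for t
      using integral_le_tangent_offset[OF that] mult_left_mono[OF x1_le_h[OF that] that]
      unfolding tangent_offset_def by (simp add: mult.commute)
    then show "\<forall>\<^sub>F t in at_top. integral {0..t} (\<lambda>u. u * lower_x2 u) \<le> h * t - x t"
      by (rule eventually_at_top_linorderI[of 0])
  qed simp
  moreover have "\<mu> \<le> mu1"
    by (rule tendsto_upperbound[OF \<mu> eventually_at_top_linorderI[of 0]]) (simp_all add: gap_le)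
  ultimately show thesis by (rule that[OF h \<mu>])
qed

subsection \<open>Identification of the constants\<close>

lemma ln_K: "ln K = ln c + p * (ln a - ln 2) - ln (2*p+1)"
  unfolding K_def using c a p by (simp add: ln_mult ln_div ln_powr)

lemma ln_h0: "ln h0 = ln a + ln (Gamma (1/(2*p+1))) - ln (2*p+1) - ln K / (2*p+1)"
  unfolding h0_def using a p K_pos stretched_exp_integral_pos[OF K_pos, of "2*p+1" 1]
  by (simp add: ln_mult ln_stretched_exp_integral)

lemma ln_mu0: "ln mu0 = ln a + ln (Gamma (2/(2*p+1))) - ln (2*p+1) - 2 * ln K / (2*p+1)"
  unfolding mu0_def using a p K_pos stretched_exp_integral_pos[OF K_pos, of "2*p+1" 2]
  by (simp add: ln_mult ln_stretched_exp_integral)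

lemma ln_L: "ln L = ln c + p * ln h0 - ln (p+1)"
  unfolding L_def using c h0_pos p by (simp add: ln_mult ln_div ln_powr)

lemma Gamma_pos_exponents:
  "Gamma (1/(2*p+1)) > 0" "Gamma (2/(2*p+1)) > 0" "Gamma (1/(p+1)) > 0" "Gamma (2/(p+1)) > 0"
  using p by (simp_all add: Gamma_real_pos)

lemma mu0_eq: "mu0 = c4 p c * a powr (1/(2*p+1))"
proof -
  have inv: "(2*p+1) * inverse (2*p+1) = 1" using p by auto
  have c4_pos: "c4 p c > 0"
    unfolding c4_def using c p Gamma_pos_exponents(2) by simp
  have "ln mu0 = ln (c4 p c * a powr (1/(2*p+1)))"
    unfolding ln_mu0 ln_K c4_def using a c p Gamma_pos_exponents(2)
    apply (simp add: ln_mult ln_div ln_powr less_imp_neq[symmetric])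
    apply (simp only: divide_inverse)
    using inv by algebra
  then show ?thesis using mu0_pos c4_pos a by simp
qed

lemma c2_pos: "c2 p c > 0" and c3_pos: "c3 p c > 0"
  unfolding c2_def c3_def using c p by (simp_all add: Gamma_real_pos)

lemma ln_c2: "ln (c2 p c) = ln (Gamma (1/(2*p+1))) + (p * ln 2 - ln c - 2*p * ln (2*p+1)) / (2*p+1)"
  unfolding c2_def using c p Gamma_pos_exponents(1)
  by (simp add: ln_mult ln_div ln_powr less_imp_neq[symmetric])

lemma ln_c3: "ln (c3 p c) = ln (Gamma (2/(2*p+1))) + (1 - 2*p)/(2*p+1) * ln (2*p+1) + 2/(2*p+1) * (p * ln 2 - ln c)"
  unfolding c3_def using c p Gamma_pos_exponents(2)
  by (simp add: ln_mult ln_div ln_powr less_imp_neq[symmetric])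

lemma mu1_first_term: "a * T\<^sup>2 / 2 = (c3 p c)\<^sup>2 / 2 / (c2 p c)\<^sup>2 * a powr (1/(2*p+1))"
proof -
  have inv: "(2*p+1) * inverse (2*p+1) = 1" using p by auto
  have "ln (a * T\<^sup>2 / 2) = ln ((c3 p c)\<^sup>2 / 2 / (c2 p c)\<^sup>2 * a powr (1/(2*p+1)))"
    using a T_pos c2_pos c3_pos h0_pos mu0_pos
    apply (simp add: ln_mult ln_div ln_realpow ln_powr T_def)
    unfolding ln_mu0 ln_h0 ln_K ln_c2 ln_c3
    apply (simp only: divide_inverse)
    using inv by algebra
  then show ?thesis using a T_pos c2_pos c3_pos by simp
qed

lemma mu1_second_term:
  "a * stretched_exp_integral 2 (p+1) L
     = (c2 p c / c) powr (2/(p+1)) * (p+1) powr ((1-p)/(1+p)) * Gamma (2/(p+1)) / (c2 p c)\<^sup>2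
       * a powr (1/(2*p+1))"
proof -
  have inv: "(2*p+1) * inverse (2*p+1) = 1" "(p+1) * inverse (p+1) = 1" using p by auto
  have "ln (a * stretched_exp_integral 2 (p+1) L)
          = ln (a powr (1/(2*p+1))) + 2/(p+1) * (ln (c2 p c) - ln c) + (1-p)/(1+p) * ln (p+1)
            + ln (Gamma (2/(p+1))) - 2 * ln (c2 p c)"
    using a p L_pos c c2_pos stretched_exp_integral_pos[OF L_pos, of "p+1" 2]
    apply (simp add: ln_mult ln_stretched_exp_integral ln_powr)
    unfolding ln_L ln_h0 ln_K ln_c2
    apply (simp only: divide_inverse add.commute[of 1 p])
    using inv by algebra
  also have "\<dots> = ln ((c2 p c / c) powr (2/(p+1)) * (p+1) powr ((1-p)/(1+p)) * Gamma (2/(p+1))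
                       / (c2 p c)\<^sup>2 * a powr (1/(2*p+1)))"
    using a p c c2_pos Gamma_pos_exponents(4)
    by (simp add: ln_mult ln_div ln_powr ln_realpow less_imp_neq[symmetric])
  finally show ?thesis
    using a p L_pos c c2_pos Gamma_pos_exponents(4) stretched_exp_integral_pos[OF L_pos, of "p+1" 2]
    by simp
qed

lemma mu1_third_term:
  "a * T * stretched_exp_integral 1 (p+1) L
     = c3 p c * (c2 p c / (c * (p+1) powr p)) powr (1/(p+1)) * Gamma (1/(p+1)) / (c2 p c)\<^sup>2
       * a powr (1/(2*p+1))"
proof -
  have inv: "(2*p+1) * inverse (2*p+1) = 1" "(p+1) * inverse (p+1) = 1" using p by auto
  have "ln (a * T * stretched_exp_integral 1 (p+1) L)
          = ln (a powr (1/(2*p+1))) + ln (c3 p c) + (ln (c2 p c) - ln c - p * ln (p+1)) / (p+1)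
            + ln (Gamma (1/(p+1))) - 2 * ln (c2 p c)"
    using a p L_pos T_pos c c2_pos h0_pos mu0_pos stretched_exp_integral_pos[OF L_pos, of "p+1" 1]
    apply (simp add: ln_mult ln_div ln_stretched_exp_integral ln_powr T_def)
    unfolding ln_L ln_mu0 ln_h0 ln_K ln_c2 ln_c3
    apply (simp only: divide_inverse add.commute[of 1 p])
    using inv by algebra
  also have "\<dots> = ln (c3 p c * (c2 p c / (c * (p+1) powr p)) powr (1/(p+1)) * Gamma (1/(p+1))
                       / (c2 p c)\<^sup>2 * a powr (1/(2*p+1)))"
    using a p c c2_pos c3_pos Gamma_pos_exponents(3)
    by (simp add: ln_mult ln_div ln_powr ln_realpow less_imp_neq[symmetric])
  finally show ?thesis
    using a p L_pos T_pos c c2_pos c3_pos Gamma_pos_exponents(3)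
      stretched_exp_integral_pos[OF L_pos, of "p+1" 1]
    by simp
qed

lemma mu1_eq: "mu1 = c5 p c * a powr (1/(2*p+1))"
  unfolding mu1_def c5_def mu1_first_term mu1_second_term mu1_third_term using c2_pos
  by (simp add: field_simps)

end

theorem lemma5:
  fixes p c a :: real and x x1 x2 :: "real \<Rightarrow> real"
  assumes "p \<ge> 1" and "c > 0" and "a > 0"
    and "\<forall>t\<ge>0. (x has_real_derivative x1 t) (at t within {0..})"
    and "\<forall>t\<ge>0. (x1 has_real_derivative x2 t) (at t within {0..})"
    and "\<forall>t\<ge>0. (x2 has_real_derivative (- c * (x t powr p) * x2 t)) (at t within {0..})"
    and "x 0 = 0" and "x1 0 = 0" and "x2 0 = a"
  shows "\<exists>h \<mu>. (x1 \<longlongrightarrow> h) at_top \<and> ((\<lambda>t. h * t - x t) \<longlongrightarrow> \<mu>) at_top \<and>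
           c4 p c * a powr (1 / (2*p+1)) \<le> \<mu> \<and> \<mu> \<le> c5 p c * a powr (1 / (2*p+1))"
proof -
  interpret blasius_solution p c a x x1 x2
    by unfold_locales (use assms in auto)
  obtain h \<mu> where "(x1 \<longlongrightarrow> h) at_top" and "((\<lambda>t. h * t - x t) \<longlongrightarrow> \<mu>) at_top"
    and "mu0 \<le> \<mu>" and "\<mu> \<le> mu1"
    by (rule slope_and_offset_limits)
  then show ?thesis unfolding mu0_eq mu1_eq by blast
qed

end
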